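(* For $n\geqslant 1$ and $k\geqslant 0$, let $\mathfrak{e}_{n,k}$ be the number of words of length $n$ over the alphabet $\{1,\dots,k\}$ avoiding both patterns $010$ and $120$ (not required to use every letter). Then $$\mathfrak{e}_{n,k}=\sum_{d=1}^{k}\binom{k}{d}\frac{1}{d}\binom{n-1}{d-1}\binom{n+d}{d-1}.$$
   Context: A word contains a pattern $p$ if some subsequence is order-isomorphic to $p$; otherwise it avoids $p$. Avoiding $010$: no $i<j<l$ with $\omega_i=\omega_l<\omega_j$. Avoiding $120$: no $i<j<l$ with $\omega_l<\omega_i<\omega_j$. *)

theory Defs
  imports Complex_Main
begin

definition avoids_010 :: "nat list \<Rightarrow> bool" where
  "avoids_010 w \<longleftrightarrow> \<not> (\<exists>i j l. i < j \<and> j < l \<and> l < length w \<and>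
      w ! i = w ! l \<and> w ! l < w ! j)"

definition avoids_120 :: "nat list \<Rightarrow> bool" where
  "avoids_120 w \<longleftrightarrow> \<not> (\<exists>i j l. i < j \<and> j < l \<and> l < length w \<and>
      w ! l < w ! i \<and> w ! i < w ! j)"

definition e_count :: "nat \<Rightarrow> nat \<Rightarrow> nat" where
  "e_count n k = card {w :: nat list. length w = n \<and> set w \<subseteq> {1..k} \<and>
      avoids_010 w \<and> avoids_120 w}"

end

theory Submission
  imports Defs "HOL-Computational_Algebra.Polynomial"
begin

text \<open>
  Merging the two patterns, a word avoids \<open>010\<close> and \<open>120\<close> iff it has no positions
  \<open>i < j < l\<close> with \<open>w!l \<le> w!i < w!j\<close>; equivalently \<open>a # v\<close> is good iff \<open>v = x @ y\<close> with \<open>x\<close>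
  good and below \<open>a\<close>, \<open>y\<close> good and above \<open>a\<close>. So the number \<open>f(n, d)\<close> of good words of
  length \<open>n\<close> whose letters form a given \<open>d\<close>-set obeys a convolution recurrence: a first
  letter of rank \<open>j\<close> leaves the \<open>j\<close> (or \<open>j - 1\<close>) letters up to it for \<open>x\<close> and the \<open>d - j\<close>
  letters above it for \<open>y\<close>.

  The coefficients of \<open>Q(n) = T(n, 0) + T(n, 1)\<close>, built from the first-passage polynomials
  \<open>T(n, r)\<close> of weighted Motzkin paths, obey the same recurrence, because \<open>T(-, r + s)\<close> is
  the convolution of \<open>T(-, r)\<close> and \<open>T(-, s)\<close>. A ballot-type closed form
  \<open>n [x^d] T(n, r) = r C(n, d) C(n + d, n + r)\<close>, checked by induction on \<open>n\<close>, gives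
  \<open>f(n, d) = C(n - 1, d - 1) C(n + d, d - 1) / d\<close> for \<open>n \<ge> 1\<close>; summing over the
  \<open>d\<close>-subsets of \<open>{1..k}\<close> yields the formula.
\<close>

text \<open>Paths on the nonnegative integers from height \<open>r\<close> that first reach \<open>0\<close> after \<open>n\<close> steps,
  a step down, level or up weighted by \<open>x\<close>, \<open>1 + 2x\<close> or \<open>1 + x\<close>.\<close>

fun first_passage_poly :: "nat \<Rightarrow> nat \<Rightarrow> int poly" where
  "first_passage_poly 0 r = (if r = 0 then 1 else 0)"
| "first_passage_poly (Suc n) 0 = 0"
| "first_passage_poly (Suc n) (Suc r) =
     [:0, 1:] * first_passage_poly n r + [:1, 2:] * first_passage_poly n (Suc r)
     + [:1, 1:] * first_passage_poly n (Suc (Suc r))"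

lemma first_passage_poly_0_right: "first_passage_poly n 0 = (if n = 0 then 1 else 0)"
  by (cases n) auto

text \<open>A path from height \<open>r + s\<close> to \<open>0\<close> first passes through height \<open>s\<close>.\<close>

lemma first_passage_poly_add:
  "first_passage_poly n (r + s) = (\<Sum>i\<le>n. first_passage_poly i r * first_passage_poly (n - i) s)"
proof (induction n arbitrary: r)
  case 0
  then show ?case by simp
next
  case (Suc m)
  show ?case
  proof (cases r)
    case 0
    have "(\<Sum>i\<le>Suc m. first_passage_poly i 0 * first_passage_poly (Suc m - i) s)
        = (\<Sum>i\<in>{0}. first_passage_poly i 0 * first_passage_poly (Suc m - i) s)"
      by (rule sum.mono_neutral_right) (auto simp: first_passage_poly_0_right)
    then show ?thesis using 0 by simp
  next
    case (Suc r')
    have "(\<Sum>i\<le>Suc m. first_passage_poly i r * first_passage_poly (Suc m - i) s)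
        = (\<Sum>i\<le>m. first_passage_poly (Suc i) r * first_passage_poly (m - i) s)"
      by (subst sum.atMost_Suc_shift) (simp add: Suc del: first_passage_poly.simps(3))
    also have "\<dots> = [:0, 1:] * (\<Sum>i\<le>m. first_passage_poly i r' * first_passage_poly (m - i) s)
        + [:1, 2:] * (\<Sum>i\<le>m. first_passage_poly i (Suc r') * first_passage_poly (m - i) s)
        + [:1, 1:] * (\<Sum>i\<le>m. first_passage_poly i (Suc (Suc r')) * first_passage_poly (m - i) s)"
      by (simp only: Suc first_passage_poly.simps(3) sum_distrib_left sum.distrib distrib_right
          mult.assoc)
    also have "\<dots> = first_passage_poly (Suc m) (r + s)"
      using Suc.IH[of r'] Suc.IH[of "Suc r'"] Suc.IH[of "Suc (Suc r')"] by (simp add: Suc)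
    finally show ?thesis by simp
  qed
qed

lemma coeff_first_passage_poly_Suc_Suc:
  "coeff (first_passage_poly (Suc n) (Suc r)) (Suc d)
     = coeff (first_passage_poly n r) d + coeff (first_passage_poly n (Suc r)) (Suc d)
       + 2 * coeff (first_passage_poly n (Suc r)) d
       + coeff (first_passage_poly n (Suc (Suc r))) (Suc d)
       + coeff (first_passage_poly n (Suc (Suc r))) d"
  by simp

lemma coeff_first_passage_poly_0: "coeff (first_passage_poly n (Suc r)) 0 = 0"
  by (induction n arbitrary: r) simp_all

lemma int_Suc_times_binomial_Suc:
  "(int k + 1) * int (n choose Suc k) = (int n - int k) * int (n choose k)"
proof (cases "k \<le> n")
  case True
  have "Suc k * (n choose Suc k) = (n - k) * (n choose k)"
    using binomial_absorption[of k n] binomial_absorb_comp[of n k] by simp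
  then show ?thesis using True by (metis of_nat_Suc of_nat_diff of_nat_mult add.commute)
next
  case False
  then show ?thesis by (simp add: binomial_eq_0 not_le)
qed

definition passage_numerator :: "nat \<Rightarrow> nat \<Rightarrow> nat \<Rightarrow> int" where
  "passage_numerator n r d = int r * int (n choose d) * int ((n + d) choose (n + r))"

text \<open>After Pascal's rule only four binomials remain, tied together by absorption identities;
  the recurrence times \<open>e + 1\<close> is a polynomial consequence of those identities.\<close>

lemma passage_numerator_recurrence:
  "int m * passage_numerator (Suc m) (Suc s) (Suc e) = int (Suc m) *
     (passage_numerator m s e + passage_numerator m (Suc s) (Suc e)
      + 2 * passage_numerator m (Suc s) e + passage_numerator m (Suc (Suc s)) (Suc e)
      + passage_numerator m (Suc (Suc s)) e)"
proof -
  define c where "c = int (m choose e)"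
  define A where "A = int ((m + e) choose (m + s))"
  define B where "B = int ((m + e) choose (m + Suc s))"
  define C where "C = int ((m + e) choose (m + Suc (Suc s)))"
  define X1 where "X1 = int (Suc m choose Suc e)"
  define X2 where "X2 = int (m choose Suc e)"
  have pascal1: "int ((m + Suc e) choose (m + Suc s)) = A + B"
    and pascal2: "int ((m + Suc e) choose (m + Suc (Suc s))) = B + C"
    and pascal3: "int ((Suc m + Suc e) choose (Suc m + Suc s)) = A + 2 * B + C"
    unfolding A_def B_def C_def by simp_all
  have "(int e + 1) * X1 = (int m + 1) * c"
    unfolding X1_def c_def using arg_cong[OF Suc_times_binomial[of e m], of int]
    by (simp del: binomial_Suc_Suc add: algebra_simps)
  moreover have "(int e + 1) * X2 = (int m - int e) * c"
    unfolding X2_def c_def using int_Suc_times_binomial_Suc[of e m] by simp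
  moreover have "(int m + int s + 1) * B = (int e - int s) * A"
    unfolding A_def B_def using int_Suc_times_binomial_Suc[of "m + s" "m + e"] by simp
  moreover have "(int m + int s + 2) * C = (int e - int s - 1) * B"
    unfolding C_def B_def using int_Suc_times_binomial_Suc[of "m + s + 1" "m + e"]
    by (simp add: algebra_simps)
  moreover have "int e + 1 \<noteq> 0" by simp
  ultimately have "int m * (int s + 1) * X1 * (A + 2 * B + C)
      = (int m + 1) * (int s * c * A + (int s + 1) * X2 * (A + B) + 2 * (int s + 1) * c * B
          + (int s + 2) * X2 * (B + C) + (int s + 2) * c * C)"
    by algebra
  then show ?thesis
    unfolding passage_numerator_def pascal1 pascal2 pascal3
      c_def[symmetric] A_def[symmetric] B_def[symmetric] C_def[symmetric]
      X1_def[symmetric] X2_def[symmetric]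
    by (simp add: algebra_simps)
qed

theorem coeff_first_passage_poly:
  "int n * coeff (first_passage_poly n r) d = passage_numerator n r d"
proof (induction n arbitrary: r d)
  case 0
  then show ?case by (cases r) (auto simp: passage_numerator_def)
next
  case (Suc m)
  show ?case
  proof (cases r)
    case 0
    then show ?thesis by (simp add: passage_numerator_def)
  next
    case r: (Suc s)
    show ?thesis
    proof (cases d)
      case 0
      then show ?thesis using r by (simp add: coeff_first_passage_poly_0 passage_numerator_def binomial_eq_0)
    next
      case d: (Suc e)
      show ?thesis
      proof (cases "m = 0")
        case True
        then show ?thesis using r d
          by (auto simp: coeff_pCons passage_numerator_def split: nat.splits)
      next
        case False
        have "int m * (int (Suc m) * coeff (first_passage_poly (Suc m) r) d)
            = int (Suc m) * (int m * coeff (first_passage_poly m s) e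
              + int m * coeff (first_passage_poly m (Suc s)) (Suc e)
              + 2 * (int m * coeff (first_passage_poly m (Suc s)) e)
              + int m * coeff (first_passage_poly m (Suc (Suc s))) (Suc e)
              + int m * coeff (first_passage_poly m (Suc (Suc s))) e)"
          unfolding r d coeff_first_passage_poly_Suc_Suc by (simp add: algebra_simps)
        also have "\<dots> = int (Suc m) * (passage_numerator m s e
              + passage_numerator m (Suc s) (Suc e) + 2 * passage_numerator m (Suc s) e
              + passage_numerator m (Suc (Suc s)) (Suc e) + passage_numerator m (Suc (Suc s)) e)"
          by (simp only: Suc.IH)
        also have "\<dots> = int m * passage_numerator (Suc m) r d"
          unfolding r d by (rule passage_numerator_recurrence[symmetric])
        finally show ?thesis using False by simp
      qed
    qed
  qed
qed

definition good_word_poly :: "nat \<Rightarrow> int poly" where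
  "good_word_poly n = first_passage_poly n 0 + first_passage_poly n (Suc 0)"

lemma first_passage_poly_Suc_1:
  "first_passage_poly (Suc m) (Suc 0)
     = (\<Sum>i\<le>m. (first_passage_poly i (Suc 0) + [:0, 1:] * good_word_poly i) * good_word_poly (m - i))"
proof -
  let ?T = first_passage_poly
  have conv: "(\<Sum>i\<le>m. ?T i r * ?T (m - i) s) = ?T m (r + s)" for r s
    by (rule first_passage_poly_add[symmetric])
  have "(\<Sum>i\<le>m. (?T i (Suc 0) + [:0, 1:] * good_word_poly i) * good_word_poly (m - i))
      = (\<Sum>i\<le>m. ?T i (Suc 0) * ?T (m - i) 0) + (\<Sum>i\<le>m. ?T i (Suc 0) * ?T (m - i) (Suc 0))
        + [:0, 1:] * ((\<Sum>i\<le>m. ?T i 0 * ?T (m - i) 0) + (\<Sum>i\<le>m. ?T i 0 * ?T (m - i) (Suc 0))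
          + (\<Sum>i\<le>m. ?T i (Suc 0) * ?T (m - i) 0) + (\<Sum>i\<le>m. ?T i (Suc 0) * ?T (m - i) (Suc 0)))"
    unfolding good_word_poly_def
    by (simp only: sum.distrib sum_distrib_left distrib_right distrib_left mult.assoc add.assoc)
  also have "\<dots> = ?T m (Suc 0) + ?T m (Suc (Suc 0))
      + [:0, 1:] * (?T m 0 + ?T m (Suc 0) + ?T m (Suc 0) + ?T m (Suc (Suc 0)))"
    unfolding conv by simp
  also have "\<dots> = [:0, 1:] * ?T m 0 + [:1, 2:] * ?T m (Suc 0) + [:1, 1:] * ?T m (Suc (Suc 0))"
  proof -
    have x2: "[:1, 2:] = 1 + [:0, 1:] + ([:0, 1:] :: int poly)"
      and x1: "[:1, 1:] = 1 + ([:0, 1:] :: int poly)"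
      by (simp_all add: one_pCons)
    have "x1 + x2 + t * (x0 + x1 + x1 + x2) = t * x0 + (1 + t + t) * x1 + (1 + t) * x2"
      for t x0 x1 x2 :: "int poly"
      by (simp add: algebra_simps)
    then show ?thesis unfolding x1 x2 .
  qed
  also have "\<dots> = ?T (Suc m) (Suc 0)" by simp
  finally show ?thesis by simp
qed

lemma coeff_first_passage_poly_1_plus_shift:
  "coeff (first_passage_poly i (Suc 0) + [:0, 1:] * good_word_poly i) j
     = (if j = 0 then 0 else coeff (good_word_poly i) j + coeff (good_word_poly i) (j - 1))"
proof (cases j)
  case 0
  then show ?thesis by (simp add: coeff_first_passage_poly_0)
next
  case (Suc j')
  have "coeff (first_passage_poly i 0) (Suc j') = 0" by (simp add: first_passage_poly_0_right)
  then show ?thesis using Suc by (simp add: good_word_poly_def)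
qed

lemma coeff_good_word_poly_Suc:
  "coeff (good_word_poly (Suc m)) d = (\<Sum>j\<in>{1..d}. \<Sum>i\<le>m.
     (coeff (good_word_poly i) j + coeff (good_word_poly i) (j - 1)) * coeff (good_word_poly (m - i)) (d - j))"
proof -
  have "coeff (good_word_poly (Suc m)) d = (\<Sum>i\<le>m. \<Sum>j\<le>d.
      coeff (first_passage_poly i (Suc 0) + [:0, 1:] * good_word_poly i) j * coeff (good_word_poly (m - i)) (d - j))"
    by (simp add: good_word_poly_def first_passage_poly_Suc_1 coeff_sum coeff_mult
        del: first_passage_poly.simps(3))
  also have "\<dots> = (\<Sum>i\<le>m. \<Sum>j\<in>{1..d}.
      coeff (first_passage_poly i (Suc 0) + [:0, 1:] * good_word_poly i) j * coeff (good_word_poly (m - i)) (d - j))"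
    by (rule sum.cong[OF refl], rule sum.mono_neutral_right)
      (auto simp: coeff_first_passage_poly_1_plus_shift simp del: coeff_add mult_pCons_left)
  also have "\<dots> = (\<Sum>i\<le>m. \<Sum>j\<in>{1..d}.
      (coeff (good_word_poly i) j + coeff (good_word_poly i) (j - 1)) * coeff (good_word_poly (m - i)) (d - j))"
    by (intro sum.cong refl) (auto simp: coeff_first_passage_poly_1_plus_shift simp del: coeff_add mult_pCons_left)
  also have "\<dots> = (\<Sum>j\<in>{1..d}. \<Sum>i\<le>m.
      (coeff (good_word_poly i) j + coeff (good_word_poly i) (j - 1)) * coeff (good_word_poly (m - i)) (d - j))"
    by (rule sum.swap)
  finally show ?thesis .
qed

text \<open>A triple \<open>w!l \<le> w!i < w!j\<close> is an occurrence of \<open>010\<close> (if \<open>w!l = w!i\<close>) or of \<open>120\<close>.\<close>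

definition has_bad_triple :: "'a::linorder list \<Rightarrow> bool" where
  "has_bad_triple w \<longleftrightarrow>
     (\<exists>i j l. i < j \<and> j < l \<and> l < length w \<and> w ! l \<le> w ! i \<and> w ! i < w ! j)"

lemma avoids_010_120_iff_not_has_bad_triple:
  "avoids_010 w \<and> avoids_120 w \<longleftrightarrow> \<not> has_bad_triple w"
  unfolding avoids_010_def avoids_120_def has_bad_triple_def
  by (auto simp: le_less) metis+

lemma has_bad_triple_Cons:
  "has_bad_triple (a # v) \<longleftrightarrow>
     has_bad_triple v \<or> (\<exists>j l. j < l \<and> l < length v \<and> v ! l \<le> a \<and> a < v ! j)"
proof
  assume "has_bad_triple (a # v)"
  then obtain i j l where ijl: "i < j" "j < l" "l < Suc (length v)"
    "(a # v) ! l \<le> (a # v) ! i" "(a # v) ! i < (a # v) ! j"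
    unfolding has_bad_triple_def by auto
  show "has_bad_triple v \<or> (\<exists>j l. j < l \<and> l < length v \<and> v ! l \<le> a \<and> a < v ! j)"
  proof (cases i)
    case 0
    then show ?thesis using ijl by (cases j; cases l) auto
  next
    case (Suc i')
    then obtain j' l' where "j = Suc j'" "l = Suc l'" using ijl by (cases j; cases l) auto
    then have "has_bad_triple v"
      unfolding has_bad_triple_def using ijl Suc by (intro exI[of _ i'] exI[of _ j'] exI[of _ l']) auto
    then show ?thesis ..
  qed
next
  assume "has_bad_triple v \<or> (\<exists>j l. j < l \<and> l < length v \<and> v ! l \<le> a \<and> a < v ! j)"
  then show "has_bad_triple (a # v)"
  proof
    assume "has_bad_triple v"
    then obtain i j l where "i < j" "j < l" "l < length v" "v ! l \<le> v ! i" "v ! i < v ! j"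
      unfolding has_bad_triple_def by blast
    then show ?thesis
      unfolding has_bad_triple_def by (intro exI[of _ "Suc i"] exI[of _ "Suc j"] exI[of _ "Suc l"]) auto
  next
    assume "\<exists>j l. j < l \<and> l < length v \<and> v ! l \<le> a \<and> a < v ! j"
    then obtain j l where "j < l" "l < length v" "v ! l \<le> a" "a < v ! j" by blast
    then show ?thesis
      unfolding has_bad_triple_def by (intro exI[of _ 0] exI[of _ "Suc j"] exI[of _ "Suc l"]) auto
  qed
qed

definition low_then_high :: "'a::linorder \<Rightarrow> 'a list \<Rightarrow> bool" where
  "low_then_high a v \<longleftrightarrow> (\<forall>c\<in>set (dropWhile (\<lambda>c. c \<le> a) v). a < c)"

lemma low_then_high_iff:
  "low_then_high a v \<longleftrightarrow> \<not> (\<exists>j l. j < l \<and> l < length v \<and> v ! l \<le> a \<and> a < v ! j)"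
proof (induction v)
  case Nil
  then show ?case by (simp add: low_then_high_def)
next
  case (Cons c v)
  let ?bad = "\<lambda>v. \<exists>j l. j < l \<and> l < length v \<and> v ! l \<le> a \<and> a < v ! j"
  show ?case
  proof (cases "c \<le> a")
    case True
    have "?bad (c # v) \<longleftrightarrow> ?bad v"
    proof
      assume "?bad (c # v)"
      then obtain j l where "j < l" "l < length (c # v)" "(c # v) ! l \<le> a" "a < (c # v) ! j"
        by blast
      then show "?bad v" using True by (cases j; cases l) auto
    next
      assume "?bad v"
      then obtain j l where "j < l" "l < length v" "v ! l \<le> a" "a < v ! j" by blast
      then show "?bad (c # v)" by (intro exI[of _ "Suc j"] exI[of _ "Suc l"]) auto
    qed
    moreover have "low_then_high a (c # v) \<longleftrightarrow> low_then_high a v"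
      using True by (simp add: low_then_high_def)
    ultimately show ?thesis using Cons.IH by simp
  next
    case False
    have "?bad (c # v) \<longleftrightarrow> (\<exists>l < length v. v ! l \<le> a)"
    proof
      assume "?bad (c # v)"
      then obtain j l where "j < l" "l < length (c # v)" "(c # v) ! l \<le> a" by blast
      then show "\<exists>l < length v. v ! l \<le> a" by (cases l) auto
    next
      assume "\<exists>l < length v. v ! l \<le> a"
      then obtain l where "l < length v" "v ! l \<le> a" by blast
      then show "?bad (c # v)" using False by (intro exI[of _ 0] exI[of _ "Suc l"]) auto
    qed
    moreover have "low_then_high a (c # v) \<longleftrightarrow> (\<forall>x\<in>set v. a < x)"
      using False by (auto simp: low_then_high_def)
    moreover have "(\<exists>l < length v. v ! l \<le> a) \<longleftrightarrow> \<not> (\<forall>x\<in>set v. a < x)"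
      by (metis in_set_conv_nth not_le)
    ultimately show ?thesis by simp
  qed
qed

fun good_word :: "'a::linorder list \<Rightarrow> bool" where
  "good_word [] \<longleftrightarrow> True"
| "good_word (a # v) \<longleftrightarrow> good_word v \<and> low_then_high a v"

lemma good_word_iff_not_has_bad_triple: "good_word w \<longleftrightarrow> \<not> has_bad_triple w"
  by (induction w) (auto simp: has_bad_triple_Cons low_then_high_iff has_bad_triple_def[of "[]"])

lemma avoids_010_120_iff_good_word: "avoids_010 w \<and> avoids_120 w \<longleftrightarrow> good_word w"
  by (simp add: avoids_010_120_iff_not_has_bad_triple good_word_iff_not_has_bad_triple)

definition good_words :: "nat \<Rightarrow> 'a::linorder set \<Rightarrow> 'a list set" where
  "good_words n S = {w. length w = n \<and> set w = S \<and> good_word w}"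

lemma finite_good_words: "finite S \<Longrightarrow> finite (good_words n S)"
  by (rule finite_subset[OF _ finite_lists_length_eq[of S n]]) (auto simp: good_words_def)

lemma good_words_disjoint: "S \<noteq> T \<Longrightarrow> good_words n S \<inter> good_words n T = {}"
  by (auto simp: good_words_def)

lemma dropWhile_le_eq_self:
  "\<forall>c\<in>set y. (b::'a::linorder) < c \<Longrightarrow> dropWhile (\<lambda>c. c \<le> b) y = y"
  by (cases y) (auto simp: not_le)

lemma takeWhile_le_eq_Nil:
  "\<forall>c\<in>set y. (b::'a::linorder) < c \<Longrightarrow> takeWhile (\<lambda>c. c \<le> b) y = []"
  by (cases y) (auto simp: not_le)

lemma good_word_append:
  assumes "\<forall>c\<in>set x. c \<le> a" "\<forall>c\<in>set y. a < c"
  shows "good_word (x @ y) \<longleftrightarrow> good_word x \<and> good_word y"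
  using assms(1)
proof (induction x)
  case Nil
  then show ?case by simp
next
  case (Cons b x)
  have "b \<le> a" using Cons.prems by simp
  have "\<forall>c\<in>set y. b < c" using assms(2) \<open>b \<le> a\<close> by (auto intro: order.strict_trans1)
  then have "low_then_high b (x @ y) \<longleftrightarrow> low_then_high b x"
  proof (cases "\<forall>c\<in>set x. c \<le> b")
    case True
    then have "dropWhile (\<lambda>c. c \<le> b) x = []" by (simp add: dropWhile_eq_Nil_conv)
    with True \<open>\<forall>c\<in>set y. b < c\<close> show ?thesis
      by (simp add: low_then_high_def dropWhile_append dropWhile_le_eq_self del: dropWhile_eq_Nil_conv)
  qed (auto simp: low_then_high_def dropWhile_append)
  then show ?case using Cons by auto
qed

lemma inj_on_Cons_append:
  "inj_on (\<lambda>(a, x, y). a # x @ y)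
     {(a::'a::linorder, x, y). (\<forall>c\<in>set x. c \<le> a) \<and> (\<forall>c\<in>set y. a < c)}"
proof (rule inj_onI, clarsimp)
  fix a :: 'a and x y x' y' :: "'a list"
  assume x: "\<forall>c\<in>set x. c \<le> a" and y: "\<forall>c\<in>set y. a < c"
    and x': "\<forall>c\<in>set x'. c \<le> a" and y': "\<forall>c\<in>set y'. a < c" and eq: "x @ y = x' @ y'"
  have "takeWhile (\<lambda>c. c \<le> a) (x @ y) = x" "takeWhile (\<lambda>c. c \<le> a) (x' @ y') = x'"
    using x x' takeWhile_le_eq_Nil[OF y] takeWhile_le_eq_Nil[OF y'] by (simp_all add: takeWhile_append)
  then show "x = x' \<and> y = y'" using eq by auto
qed

text \<open>A good word \<open>a # v\<close> splits as \<open>a # x @ y\<close> with \<open>x\<close> below and \<open>y\<close> above \<open>a\<close>; the prefix \<open>x\<close>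
  may or may not use the letter \<open>a\<close> itself.\<close>

lemma Cons_in_good_words_SucE:
  assumes "a # v \<in> good_words (Suc n) S"
  obtains x y where "v = x @ y" "a \<in> S" "length x \<le> n"
    "x \<in> good_words (length x) {s\<in>S. s \<le> a} \<union> good_words (length x) {s\<in>S. s < a}"
    "y \<in> good_words (n - length x) {s\<in>S. a < s}"
proof
  define x where "x = takeWhile (\<lambda>c. c \<le> a) v"
  define y where "y = dropWhile (\<lambda>c. c \<le> a) v"
  show v: "v = x @ y" by (simp add: x_def y_def)
  have xa: "\<forall>c\<in>set x. c \<le> a" unfolding x_def by (meson set_takeWhileD)
  have ya: "\<forall>c\<in>set y. a < c" using assms by (simp add: good_words_def low_then_high_def y_def)
  have good: "good_word x" "good_word y"
    using assms v good_word_append[OF xa ya] by (auto simp: good_words_def)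
  have set_w: "set (a # x @ y) = S" and len: "length x \<le> n" "length y = n - length x"
    using assms v by (auto simp: good_words_def)
  then show "a \<in> S" "length x \<le> n" by auto
  have "set y = {s\<in>S. a < s}"
    using set_w xa ya by (auto simp: not_less[symmetric])
  then show "y \<in> good_words (n - length x) {s\<in>S. a < s}"
    using good len by (simp add: good_words_def)
  have "set x = {s\<in>S. s \<le> a} \<or> set x = {s\<in>S. s < a}"
  proof (cases "a \<in> set x")
    case True
    then show ?thesis using set_w xa ya by (auto simp: not_less[symmetric])
  next
    case False
    then show ?thesis using set_w xa ya by (auto simp: order.strict_iff_order)
  qed
  then show "x \<in> good_words (length x) {s\<in>S. s \<le> a} \<union> good_words (length x) {s\<in>S. s < a}"
    using good by (auto simp: good_words_def)
qed

lemma Cons_append_in_good_words_Suc: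
  assumes "a \<in> S" "i \<le> n"
    and x: "x \<in> good_words i {s\<in>S. s \<le> a} \<union> good_words i {s\<in>S. s < a}"
    and y: "y \<in> good_words (n - i) {s\<in>S. a < s}"
  shows "a # x @ y \<in> good_words (Suc n) S"
proof -
  have set_x: "insert a (set x) = {s\<in>S. s \<le> a}"
    using x \<open>a \<in> S\<close> by (auto simp: good_words_def order.strict_iff_order)
  then have xa: "\<forall>c\<in>set x. c \<le> a" by blast
  have set_y: "set y = {s\<in>S. a < s}" using y by (simp add: good_words_def)
  then have ya: "\<forall>c\<in>set y. a < c" by blast
  have "low_then_high a (x @ y)"
    using xa ya by (simp add: low_then_high_def dropWhile_append dropWhile_le_eq_self)
  moreover have "set (a # x @ y) = S"
    using set_x set_y by (auto simp: not_less[symmetric])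
  ultimately show ?thesis
    using x y \<open>i \<le> n\<close> good_word_append[OF xa ya] by (auto simp: good_words_def)
qed

lemma good_words_Suc:
  "good_words (Suc n) S = (\<lambda>(a, x, y). a # x @ y) `
     (SIGMA a:S. \<Union>i\<le>n. (good_words i {s\<in>S. s \<le> a} \<union> good_words i {s\<in>S. s < a})
                         \<times> good_words (n - i) {s\<in>S. a < s})"
  (is "_ = ?f ` ?D")
proof
  show "good_words (Suc n) S \<subseteq> ?f ` ?D"
  proof
    fix w assume w: "w \<in> good_words (Suc n) S"
    then obtain a v where wv: "w = a # v" by (cases w) (auto simp: good_words_def)
    from w obtain x y where "v = x @ y" "a \<in> S" "length x \<le> n"
      "x \<in> good_words (length x) {s\<in>S. s \<le> a} \<union> good_words (length x) {s\<in>S. s < a}"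
      "y \<in> good_words (n - length x) {s\<in>S. a < s}"
      unfolding wv by (rule Cons_in_good_words_SucE)
    then show "w \<in> ?f ` ?D" using wv by (intro image_eqI[of _ _ "(a, x, y)"]) auto
  qed
  show "?f ` ?D \<subseteq> good_words (Suc n) S"
    by (auto intro: Cons_append_in_good_words_Suc)
qed

lemma card_good_words_Suc:
  fixes S :: "'a::linorder set"
  assumes "finite S"
  shows "card (good_words (Suc n) S) = (\<Sum>a\<in>S. \<Sum>i\<le>n.
     (card (good_words i {s\<in>S. s \<le> a}) + card (good_words i {s\<in>S. s < a}))
     * card (good_words (n - i) {s\<in>S. a < s}))"
proof -
  let ?X = "\<lambda>a i. good_words i {s\<in>S. s \<le> a} \<union> good_words i {s\<in>S. s < a}"
  let ?Y = "\<lambda>a i. good_words (n - i) {s\<in>S. a < s}"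
  have fin: "finite (?X a i)" "finite (?Y a i)" for a i
    using assms by (simp_all add: finite_good_words)
  have card_X: "card (?X a i) = card (good_words i {s\<in>S. s \<le> a}) + card (good_words i {s\<in>S. s < a})"
    if "a \<in> S" for a i
  proof (rule card_Un_disjoint)
    have "{s\<in>S. s \<le> a} \<noteq> {s\<in>S. s < a}" using that by blast
    then show "good_words i {s\<in>S. s \<le> a} \<inter> good_words i {s\<in>S. s < a} = {}"
      by (rule good_words_disjoint)
  qed (use assms in \<open>simp_all add: finite_good_words\<close>)
  have card_D: "card (\<Union>i\<le>n. ?X a i \<times> ?Y a i) = (\<Sum>i\<le>n. card (?X a i) * card (?Y a i))" for a
  proof (subst card_UN_disjoint)
    show "\<forall>i\<in>{..n}. \<forall>j\<in>{..n}. i \<noteq> j \<longrightarrow> (?X a i \<times> ?Y a i) \<inter> (?X a j \<times> ?Y a j) = {}"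
      by (auto simp: good_words_def)
  qed (use fin in \<open>simp_all add: card_cartesian_product\<close>)
  have "inj_on (\<lambda>(a, x, y). a # x @ y) (SIGMA a:S. \<Union>i\<le>n. ?X a i \<times> ?Y a i)"
    by (rule inj_on_subset[OF inj_on_Cons_append]) (auto simp: good_words_def dest: less_imp_le)
  then have "card (good_words (Suc n) S) = card (SIGMA a:S. \<Union>i\<le>n. ?X a i \<times> ?Y a i)"
    unfolding good_words_Suc by (rule card_image)
  also have "\<dots> = (\<Sum>a\<in>S. card (\<Union>i\<le>n. ?X a i \<times> ?Y a i))"
    using assms fin by simp
  finally show ?thesis
    using card_X by (simp add: card_D)
qed

lemma card_less_eq_card_le_minus_1:
  fixes S :: "'a::linorder set"
  assumes "finite S" "a \<in> S"
  shows "card {s\<in>S. s < a} = card {s\<in>S. s \<le> a} - 1"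
proof -
  have "{s\<in>S. s \<le> a} = insert a {s\<in>S. s < a}" using assms(2) by auto
  then show ?thesis using assms(1) by simp
qed

lemma card_greater_eq_card_minus_card_le:
  fixes S :: "'a::linorder set"
  assumes "finite S"
  shows "card {s\<in>S. a < s} = card S - card {s\<in>S. s \<le> a}"
proof -
  have "S = {s\<in>S. s \<le> a} \<union> {s\<in>S. a < s}" by auto
  moreover have "{s\<in>S. s \<le> a} \<inter> {s\<in>S. a < s} = {}" by auto
  ultimately have "card S = card {s\<in>S. s \<le> a} + card {s\<in>S. a < s}"
    using assms by (metis card_Un_disjoint finite_Un)
  then show ?thesis by simp
qed

lemma sum_rank_reindex:
  fixes S :: "'a::linorder set"
  assumes "finite S"
  shows "(\<Sum>a\<in>S. h (card {s\<in>S. s \<le> a})) = (\<Sum>j\<in>{1..card S}. h j)"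
proof -
  define rank where "rank a = card {s\<in>S. s \<le> a}" for a
  have "strict_mono_on S rank"
  proof (rule monotone_onI)
    fix a b assume "a \<in> S" "b \<in> S" "a < b"
    moreover have "{s\<in>S. s \<le> a} \<subseteq> {s\<in>S. s \<le> b}"
      using \<open>a < b\<close> by (auto dest: order.trans[OF _ less_imp_le])
    moreover have "b \<notin> {s\<in>S. s \<le> a}" using \<open>a < b\<close> by (simp add: not_le)
    ultimately have "{s\<in>S. s \<le> a} \<subset> {s\<in>S. s \<le> b}" by blast
    then show "rank a < rank b" unfolding rank_def using assms by (intro psubset_card_mono) auto
  qed
  then have inj: "inj_on rank S" by (rule strict_mono_on_imp_inj_on)
  have "rank ` S \<subseteq> {1..card S}"
  proof
    fix j assume "j \<in> rank ` S"
    then obtain a where a: "a \<in> S" "j = rank a" by auto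
    then have "0 < rank a" unfolding rank_def using assms by (auto simp: card_gt_0_iff)
    moreover have "rank a \<le> card S" unfolding rank_def using assms by (intro card_mono) auto
    ultimately show "j \<in> {1..card S}" using a by simp
  qed
  moreover have "card (rank ` S) = card {1..card S}" using card_image[OF inj] by simp
  ultimately have "bij_betw rank S {1..card S}"
    using inj card_subset_eq[of "{1..card S}" "rank ` S"] by (simp add: bij_betw_def)
  then show ?thesis unfolding rank_def[symmetric] by (rule sum.reindex_bij_betw)
qed

theorem card_good_words:
  fixes S :: "'a::linorder set"
  assumes "finite S"
  shows "int (card (good_words n S)) = coeff (good_word_poly n) (card S)"
  using assms
proof (induction n arbitrary: S rule: less_induct)
  case (less n)
  show ?case
  proof (cases n)
    case 0
    have "good_words 0 S = (if S = {} then {[]} else {})" by (auto simp: good_words_def)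
    then show ?thesis using 0 less.prems by (simp add: good_word_poly_def)
  next
    case (Suc m)
    let ?c = "\<lambda>i j. coeff (good_word_poly i) j"
    let ?rank = "\<lambda>a. card {s\<in>S. s \<le> a}"
    define h where "h j = (\<Sum>i\<le>m. (?c i j + ?c i (j - 1)) * ?c (m - i) (card S - j))" for j
    have IH: "int (card (good_words i T)) = ?c i (card T)" if "i \<le> m" "finite T" for i and T :: "'a set"
      using less.IH that Suc by simp
    have "int (card (good_words n S)) = (\<Sum>a\<in>S. \<Sum>i\<le>m.
        (int (card (good_words i {s\<in>S. s \<le> a})) + int (card (good_words i {s\<in>S. s < a})))
        * int (card (good_words (m - i) {s\<in>S. a < s})))"
      using card_good_words_Suc[OF less.prems, of m] Suc by simp
    also have "\<dots> = (\<Sum>a\<in>S. h (?rank a))"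
      unfolding h_def using less.prems
      by (intro sum.cong refl) (simp add: IH card_less_eq_card_le_minus_1 card_greater_eq_card_minus_card_le)
    also have "\<dots> = (\<Sum>j\<in>{1..card S}. h j)"
      using less.prems by (rule sum_rank_reindex)
    also have "\<dots> = coeff (good_word_poly n) (card S)"
      unfolding h_def Suc by (rule coeff_good_word_poly_Suc[symmetric])
    finally show ?thesis .
  qed
qed

lemma coeff_good_word_poly_0:
  assumes "n \<ge> 1"
  shows "coeff (good_word_poly n) 0 = 0"
  using assms by (simp add: good_word_poly_def first_passage_poly_0_right coeff_first_passage_poly_0)

lemma coeff_good_word_poly:
  assumes "n \<ge> 1" "d \<ge> 1"
  shows "real_of_int (coeff (good_word_poly n) d)
    = 1 / real d * real ((n - 1) choose (d - 1)) * real ((n + d) choose (d - 1))"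
proof -
  define c where "c = real_of_int (coeff (good_word_poly n) d)"
  have "int n * coeff (good_word_poly n) d = int (n choose d) * int ((n + d) choose (n + 1))"
    using assms coeff_first_passage_poly[of n "Suc 0" d]
    by (simp add: good_word_poly_def first_passage_poly_0_right passage_numerator_def)
  moreover have "(n + d) choose (n + 1) = (n + d) choose (d - 1)"
    using assms binomial_symmetric[of "d - 1" "n + d"] by simp
  ultimately have numerator: "real n * c = real (n choose d) * real ((n + d) choose (d - 1))"
    unfolding c_def by (metis of_int_mult of_int_of_nat_eq)
  have absorb: "real d * real (n choose d) = real n * real ((n - 1) choose (d - 1))"
    using times_binomial_minus1_eq[of d n] assms by (simp flip: of_nat_mult)
  have "real n * (real d * c) = real n * (real ((n - 1) choose (d - 1)) * real ((n + d) choose (d - 1)))"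
    by (metis numerator absorb mult.assoc mult.left_commute)
  then show ?thesis
    using assms unfolding c_def[symmetric] by (simp add: field_simps)
qed

lemma sum_Pow_card:
  fixes g :: "nat \<Rightarrow> 'a::comm_semiring_1"
  assumes "finite A"
  shows "(\<Sum>S\<in>Pow A. g (card S)) = (\<Sum>d\<le>card A. of_nat (card A choose d) * g d)"
proof -
  have Pow_eq: "Pow A = (\<Union>d\<le>card A. {S. S \<subseteq> A \<and> card S = d})"
    using assms by (auto intro: card_mono)
  have "(\<Sum>S\<in>Pow A. g (card S)) = (\<Sum>d\<le>card A. \<Sum>S\<in>{S. S \<subseteq> A \<and> card S = d}. g (card S))"
    unfolding Pow_eq using assms by (subst sum.UNION_disjoint) auto
  also have "\<dots> = (\<Sum>d\<le>card A. of_nat (card A choose d) * g d)"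
    using n_subsets[OF assms] by simp
  finally show ?thesis .
qed

lemma e_count_eq_sum_good_words: "e_count n k = (\<Sum>S\<in>Pow {1..k}. card (good_words n S))"
proof -
  have words_eq: "{w. length w = n \<and> set w \<subseteq> {1..k} \<and> avoids_010 w \<and> avoids_120 w}
      = (\<Union>S\<in>Pow {1..k}. good_words n S)"
    unfolding good_words_def avoids_010_120_iff_good_word by blast
  have "finite (good_words n S)" if "S \<in> Pow {1..k}" for S
    using that by (intro finite_good_words) (auto intro: finite_subset)
  then show ?thesis
    unfolding e_count_def words_eq by (intro card_UN_disjoint) (auto simp: good_words_disjoint)
qed

theorem mainTheorem6:
  fixes n k :: nat
  assumes "n \<ge> 1"
  shows "real (e_count n k) =
    (\<Sum>d = 1..k. real (k choose d) * (1 / real d) * real ((n - 1) choose (d - 1))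
                  * real ((n + d) choose (d - 1)))"
proof -
  let ?c = "\<lambda>d. real_of_int (coeff (good_word_poly n) d)"
  have "real (e_count n k) = (\<Sum>S\<in>Pow {1..k}. ?c (card S))"
    unfolding e_count_eq_sum_good_words of_nat_sum
    by (intro sum.cong refl) (metis card_good_words finite_atLeastAtMost finite_subset PowD of_int_of_nat_eq)
  also have "\<dots> = (\<Sum>d\<le>k. real (k choose d) * ?c d)"
    using sum_Pow_card[of "{1..k}" ?c] by simp
  also have "\<dots> = (\<Sum>d = 1..k. real (k choose d) * ?c d)"
    using assms by (simp add: atMost_atLeast0 sum.atLeast_Suc_atMost coeff_good_word_poly_0)
  also have "\<dots> = (\<Sum>d = 1..k. real (k choose d) * (1 / real d) * real ((n - 1) choose (d - 1))
                  * real ((n + d) choose (d - 1)))"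
    using assms by (intro sum.cong refl) (simp add: coeff_good_word_poly)
  finally show ?thesis .
qed

end
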